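(* Let $n\in\mathbb N$ and let $K_{4n}$ be the complete graph on $4n$ vertices. The graph obtained from $K_{4n}$ by deleting a single edge $\{u,v\}$ exhibits Laplacian perfect state transfer between $u$ and $v$. More generally, if $F$ is any nonempty set of pairwise non-adjacent (vertex-disjoint) edges of $K_{4n}$, then the graph $K_{4n}-F$ exhibits Laplacian perfect state transfer at time $\pi/2$ between the two end vertices of every edge in $F$.
   Context: For a graph with Laplacian $L=D-A$ (degree matrix minus adjacency matrix), $U_L(t)=\exp(-itL)$. The graph exhibits Laplacian perfect state transfer between distinct vertices $u,v$ at time $\tau$ if $U_L(\tau)\mathbf e_u=\gamma\mathbf e_v$ for some $\gamma\in\mathbb C$, where $\mathbf e_u$ is the standard basis vector of $u$. *)

theory Defs
  imports "Jordan_Normal_Form.Matrix" Complex_Main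
begin

definition mat_exp :: "complex mat \<Rightarrow> complex mat" where
  "mat_exp M = mat (dim_row M) (dim_col M)
     (\<lambda>(i,j). \<Sum>k. (M ^\<^sub>m k) $$ (i,j) / of_nat (fact k))"

definition adj_mat :: "nat \<Rightarrow> (nat \<Rightarrow> nat \<Rightarrow> bool) \<Rightarrow> complex mat" where
  "adj_mat N E = mat N N (\<lambda>(i,j). if E i j then 1 else 0)"

definition deg_mat :: "nat \<Rightarrow> (nat \<Rightarrow> nat \<Rightarrow> bool) \<Rightarrow> complex mat" where
  "deg_mat N E = mat N N (\<lambda>(i,j). if i = j then of_nat (card {k\<in>{0..<N}. E i k}) else 0)"

definition laplacian :: "nat \<Rightarrow> (nat \<Rightarrow> nat \<Rightarrow> bool) \<Rightarrow> complex mat" where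
  "laplacian N E = deg_mat N E - adj_mat N E"

definition lap_walk :: "nat \<Rightarrow> (nat \<Rightarrow> nat \<Rightarrow> bool) \<Rightarrow> real \<Rightarrow> complex mat" where
  "lap_walk N E t = mat_exp ((- \<i> * of_real t) \<cdot>\<^sub>m laplacian N E)"

definition lap_pst :: "nat \<Rightarrow> (nat \<Rightarrow> nat \<Rightarrow> bool) \<Rightarrow> nat \<Rightarrow> nat \<Rightarrow> real \<Rightarrow> bool" where
  "lap_pst N E u v tau \<longleftrightarrow> u < N \<and> v < N \<and> u \<noteq> v \<and>
     (\<exists>\<gamma>::complex. lap_walk N E tau *\<^sub>v unit_vec N u = \<gamma> \<cdot>\<^sub>v unit_vec N v)"

definition complete_minus :: "nat \<Rightarrow> nat set set \<Rightarrow> nat \<Rightarrow> nat \<Rightarrow> bool" where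
  "complete_minus N F i j \<longleftrightarrow> i < N \<and> j < N \<and> i \<noteq> j \<and> {i,j} \<notin> F"

end

theory Submission
  imports Defs
begin

text \<open>In \<open>K\<^sub>N - F\<close> with \<open>F\<close> a matching and \<open>{u,v} \<in> F\<close>, the vector \<open>e\<^sub>u\<close> splits into
  eigenvectors of the Laplacian: \<open>e\<^sub>u = 1/N + d/2 + s/2\<close> with \<open>d = e\<^sub>u - e\<^sub>v\<close> (eigenvalue
  \<open>N - 2\<close>) and \<open>s = e\<^sub>u + e\<^sub>v - 2/N\<close> (eigenvalue \<open>N\<close>), the constant part having eigenvalue \<open>0\<close>.
  At time \<open>\<pi>/2\<close> with \<open>4 dvd N\<close> the phases are \<open>1, -1, 1\<close>, so \<open>e\<^sub>u\<close> evolves into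
  \<open>1/N - d/2 + s/2 = e\<^sub>v\<close>.\<close>

lemma mat_pow_mult_eigenvector:
  fixes M :: "'a :: field mat"
  assumes M: "M \<in> carrier_mat N N" and x: "x \<in> carrier_vec N" and eigen: "M *\<^sub>v x = \<mu> \<cdot>\<^sub>v x"
  shows "(M ^\<^sub>m k) *\<^sub>v x = \<mu> ^ k \<cdot>\<^sub>v x"
proof (induction k)
  case 0
  show ?case using M x by simp
next
  case (Suc k)
  have Mk: "M ^\<^sub>m k \<in> carrier_mat N N" using M by simp
  have "(M ^\<^sub>m Suc k) *\<^sub>v x = (M ^\<^sub>m k) *\<^sub>v (\<mu> \<cdot>\<^sub>v x)"
    using assoc_mult_mat_vec[OF Mk M x] by (simp add: eigen)
  also have "\<dots> = \<mu> ^ Suc k \<cdot>\<^sub>v x"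
    by (simp add: mult_mat_vec[OF Mk x] Suc.IH smult_smult_assoc mult.commute)
  finally show ?case .
qed

lemma norm_mat_pow_entry_le:
  fixes M :: "'a :: real_normed_field mat"
  assumes M: "M \<in> carrier_mat N N" and bound: "\<And>i j. i < N \<Longrightarrow> j < N \<Longrightarrow> norm (M $$ (i,j)) \<le> B"
    and i: "i < N" and j: "j < N"
  shows "norm ((M ^\<^sub>m k) $$ (i,j)) \<le> (of_nat N * B) ^ k"
  using j
proof (induction k arbitrary: j)
  case 0
  show ?case using i 0 M by simp
next
  case (Suc k)
  have B: "0 \<le> B" using bound[OF i i] norm_ge_zero order_trans by blast
  have "(M ^\<^sub>m Suc k) $$ (i,j) = (\<Sum>l<N. (M ^\<^sub>m k) $$ (i,l) * M $$ (l,j))"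
    using M i Suc.prems by (simp add: scalar_prod_def atLeast0LessThan)
  also have "norm \<dots> \<le> (\<Sum>l<N. (of_nat N * B) ^ k * B)"
    by (rule sum_norm_le)
       (auto simp: norm_mult intro!: mult_mono Suc.IH bound Suc.prems B zero_le_power mult_nonneg_nonneg)
  also have "\<dots> = (of_nat N * B) ^ Suc k" by (simp add: algebra_simps)
  finally show ?case .
qed

lemma summable_mat_exp_entry:
  fixes M :: "complex mat"
  assumes M: "M \<in> carrier_mat N N" and i: "i < N" and j: "j < N"
  shows "summable (\<lambda>k. (M ^\<^sub>m k) $$ (i,j) / of_nat (fact k))"
proof -
  define B where "B = (\<Sum>i<N. \<Sum>j<N. norm (M $$ (i,j)))"
  have bound: "norm (M $$ (i,j)) \<le> B" if "i < N" "j < N" for i j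
    unfolding B_def using that
    by (intro order_trans[OF _ member_le_sum[of i]] member_le_sum[of j]) (auto intro: sum_nonneg)
  have "summable (\<lambda>k. (real N * B) ^ k / fact k)"
    using summable_exp[of "real N * B"] by (simp add: field_simps)
  then show ?thesis
    by (rule summable_norm_cancel[OF summable_comparison_test'])
       (auto simp: norm_divide intro!: divide_right_mono norm_mat_pow_entry_le[OF M bound i j])
qed

lemma index_mat_exp_mult_vec:
  assumes M: "M \<in> carrier_mat N N" and x: "x \<in> carrier_vec N" and i: "i < N"
  shows "(mat_exp M *\<^sub>v x) $ i = (\<Sum>k. (M ^\<^sub>m k *\<^sub>v x) $ i / of_nat (fact k))"
proof -
  have "(mat_exp M *\<^sub>v x) $ i = (\<Sum>j<N. (\<Sum>k. (M ^\<^sub>m k) $$ (i,j) / of_nat (fact k)) * x $ j)"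
    using M x i by (simp add: mat_exp_def scalar_prod_def atLeast0LessThan)
  also have "\<dots> = (\<Sum>j<N. \<Sum>k. (M ^\<^sub>m k) $$ (i,j) / of_nat (fact k) * x $ j)"
    using summable_mat_exp_entry[OF M i] by (simp add: suminf_mult2)
  also have "\<dots> = (\<Sum>k. \<Sum>j<N. (M ^\<^sub>m k) $$ (i,j) / of_nat (fact k) * x $ j)"
    using summable_mat_exp_entry[OF M i] by (intro suminf_sum[symmetric] summable_mult2) auto
  also have "\<dots> = (\<Sum>k. (M ^\<^sub>m k *\<^sub>v x) $ i / of_nat (fact k))"
    using M x i by (simp add: scalar_prod_def atLeast0LessThan sum_divide_distrib field_simps)
  finally show ?thesis .
qed

lemma mat_exp_mult_eigenvector:
  assumes M: "M \<in> carrier_mat N N" and x: "x \<in> carrier_vec N" and eigen: "M *\<^sub>v x = \<mu> \<cdot>\<^sub>v x"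
  shows "mat_exp M *\<^sub>v x = exp \<mu> \<cdot>\<^sub>v x"
proof (rule eq_vecI)
  fix i assume "i < dim_vec (exp \<mu> \<cdot>\<^sub>v x)"
  then have i: "i < N" using x by simp
  have "(\<lambda>k. x $ i * (\<mu> ^ k /\<^sub>R fact k)) sums (x $ i * exp \<mu>)"
    by (intro sums_mult exp_converges)
  then have "(\<lambda>k. (M ^\<^sub>m k *\<^sub>v x) $ i / of_nat (fact k)) sums (x $ i * exp \<mu>)"
    using i x by (simp add: mat_pow_mult_eigenvector[OF M x eigen] scaleR_conv_of_real field_simps)
  then show "(mat_exp M *\<^sub>v x) $ i = (exp \<mu> \<cdot>\<^sub>v x) $ i"
    using i x by (simp add: index_mat_exp_mult_vec[OF M x i] sums_iff mult.commute)
qed (use M x in \<open>simp add: mat_exp_def\<close>)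

lemma laplacian_carrier_mat: "laplacian N E \<in> carrier_mat N N"
  unfolding laplacian_def deg_mat_def adj_mat_def by (rule minus_carrier_mat) auto

lemma index_laplacian:
  assumes "i < N" "j < N"
  shows "laplacian N E $$ (i,j) =
    (if i = j then of_nat (card {k\<in>{0..<N}. E i k}) else 0) - (if E i j then 1 else 0)"
  using assms by (simp add: laplacian_def deg_mat_def adj_mat_def)

lemma laplacian_mult_ones: "laplacian N E *\<^sub>v vec N (\<lambda>_. 1) = 0\<^sub>v N"
proof (rule eq_vecI)
  fix i assume "i < dim_vec (0\<^sub>v N :: complex vec)"
  then have i: "i < N" by simp
  define deg :: complex where "deg = of_nat (card {k\<in>{0..<N}. E i k})"
  have "(laplacian N E *\<^sub>v vec N (\<lambda>_. 1)) $ i = (\<Sum>j\<in>{0..<N}. laplacian N E $$ (i,j))"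
    using i laplacian_carrier_mat[of N E] by (simp add: scalar_prod_def)
  also have "\<dots> = (\<Sum>j\<in>{0..<N}. (if i = j then deg else 0) - (if E i j then 1 else 0))"
    by (rule sum.cong) (simp_all add: index_laplacian i deg_def)
  also have "\<dots> = deg - (\<Sum>j\<in>{0..<N}. if E i j then 1 else 0)"
    using i by (simp add: sum_subtractf)
  also have "(\<Sum>j\<in>{0..<N}. if E i j then 1 else 0) = deg"
    using sum.inter_filter[OF finite_atLeastLessThan, of "\<lambda>_. 1 :: complex" 0 N "E i"]
    by (simp add: deg_def)
  finally show "(laplacian N E *\<^sub>v vec N (\<lambda>_. 1)) $ i = 0\<^sub>v N $ i"
    using i by simp
qed (use laplacian_carrier_mat[of N E] in simp)

lemma laplacian_complete_minus_mult_unit_vec: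
  assumes disj: "\<forall>e\<in>F. \<forall>e'\<in>F. e \<noteq> e' \<longrightarrow> e \<inter> e' = {}" and uv: "{u,v} \<in> F"
    and u: "u < N" and v: "v < N" and "u \<noteq> v"
  shows "laplacian N (complete_minus N F) *\<^sub>v unit_vec N u
    = (of_nat N - 1) \<cdot>\<^sub>v unit_vec N u + unit_vec N v - vec N (\<lambda>_. 1)"
proof (rule eq_vecI)
  have partner: "{k,u} \<in> F \<longleftrightarrow> k = v" for k
  proof
    assume kF: "{k,u} \<in> F"
    have "u \<in> {k,u} \<inter> {u,v}" by simp
    with disj kF uv have "{k,u} = {u,v}" by (metis empty_iff)
    with \<open>u \<noteq> v\<close> show "k = v" by (auto simp: doubleton_eq_iff)
  qed (use uv in \<open>simp add: insert_commute\<close>)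
  have "{k. k < N \<and> complete_minus N F u k} = {0..<N} - {u,v}"
    using u v by (auto simp: complete_minus_def partner insert_commute)
  then have degree: "of_nat (card {k. k < N \<and> complete_minus N F u k}) = (of_nat N - 2 :: complex)"
    using u v \<open>u \<noteq> v\<close> by (simp add: card_Diff_subset of_nat_diff)
  fix i assume "i < dim_vec ((of_nat N - 1) \<cdot>\<^sub>v unit_vec N u + unit_vec N v - vec N (\<lambda>_. 1 :: complex))"
  then have i: "i < N" by simp
  have adjacent: "complete_minus N F i u \<longleftrightarrow> i \<noteq> u \<and> i \<noteq> v"
    using i u by (auto simp: complete_minus_def partner)
  have "(laplacian N (complete_minus N F) *\<^sub>v unit_vec N u) $ i = laplacian N (complete_minus N F) $$ (i,u)"
    using i u laplacian_carrier_mat[of N "complete_minus N F"] by simp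
  also have "\<dots> = (if i = u then of_nat N - 2 else if i = v then 0 else -1)"
    using i u v \<open>u \<noteq> v\<close> by (simp add: index_laplacian degree adjacent)
  also have "\<dots> = ((of_nat N - 1) \<cdot>\<^sub>v unit_vec N u + unit_vec N v - vec N (\<lambda>_. 1)) $ i"
    using i u v \<open>u \<noteq> v\<close> by simp
  finally show "(laplacian N (complete_minus N F) *\<^sub>v unit_vec N u) $ i
    = ((of_nat N - 1) \<cdot>\<^sub>v unit_vec N u + unit_vec N v - vec N (\<lambda>_. 1)) $ i" .
qed (use laplacian_carrier_mat[of N "complete_minus N F"] in simp)

lemma lap_walk_mult_eigenvector:
  assumes x: "x \<in> carrier_vec N" and eigen: "laplacian N E *\<^sub>v x = \<mu> \<cdot>\<^sub>v x"
  shows "lap_walk N E t *\<^sub>v x = exp (- \<i> * of_real t * \<mu>) \<cdot>\<^sub>v x"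
proof -
  let ?c = "- \<i> * of_real t"
  have L: "laplacian N E \<in> carrier_mat N N" by (rule laplacian_carrier_mat)
  have "(?c \<cdot>\<^sub>m laplacian N E) *\<^sub>v x = ?c \<cdot>\<^sub>v (laplacian N E *\<^sub>v x)"
    using L x by (intro eq_vecI) (auto simp: scalar_prod_def sum_distrib_left mult.assoc)
  also have "\<dots> = (?c * \<mu>) \<cdot>\<^sub>v x" by (simp add: eigen smult_smult_assoc)
  finally show ?thesis
    unfolding lap_walk_def using L x by (intro mat_exp_mult_eigenvector) auto
qed

lemma laplacian_complete_minus_eigenvectors:
  assumes disj: "\<forall>e\<in>F. \<forall>e'\<in>F. e \<noteq> e' \<longrightarrow> e \<inter> e' = {}" and uv: "{u,v} \<in> F"
    and u: "u < N" and v: "v < N" and "u \<noteq> v"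
  defines "L \<equiv> laplacian N (complete_minus N F)" and "ones \<equiv> vec N (\<lambda>_. 1)"
  shows "L *\<^sub>v (unit_vec N u - unit_vec N v) = (of_nat N - 2) \<cdot>\<^sub>v (unit_vec N u - unit_vec N v)"
      (is "_ = _ \<cdot>\<^sub>v ?d")
    and "L *\<^sub>v (unit_vec N u + unit_vec N v - (2 / of_nat N) \<cdot>\<^sub>v ones)
      = of_nat N \<cdot>\<^sub>v (unit_vec N u + unit_vec N v - (2 / of_nat N) \<cdot>\<^sub>v ones)"
      (is "_ = _ \<cdot>\<^sub>v ?s")
proof -
  have L: "L \<in> carrier_mat N N" unfolding L_def by (rule laplacian_carrier_mat)
  have ones: "ones \<in> carrier_vec N" unfolding ones_def by simp
  have Lu: "L *\<^sub>v unit_vec N u = (of_nat N - 1) \<cdot>\<^sub>v unit_vec N u + unit_vec N v - ones"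
    unfolding L_def ones_def by (rule laplacian_complete_minus_mult_unit_vec[OF disj uv u v \<open>u \<noteq> v\<close>])
  have Lv: "L *\<^sub>v unit_vec N v = (of_nat N - 1) \<cdot>\<^sub>v unit_vec N v + unit_vec N u - ones"
    unfolding L_def ones_def using \<open>u \<noteq> v\<close>
    by (intro laplacian_complete_minus_mult_unit_vec[OF disj _ v u]) (use uv in \<open>auto simp: insert_commute\<close>)
  have L1: "L *\<^sub>v ones = 0\<^sub>v N"
    unfolding L_def ones_def by (rule laplacian_mult_ones)
  have "L *\<^sub>v ?d = L *\<^sub>v unit_vec N u - L *\<^sub>v unit_vec N v"
    using L by (auto intro: mult_minus_distrib_mat_vec)
  also have "\<dots> = (of_nat N - 2) \<cdot>\<^sub>v ?d"
    unfolding Lu Lv ones_def using u v by (intro eq_vecI) auto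
  finally show "L *\<^sub>v ?d = (of_nat N - 2) \<cdot>\<^sub>v ?d" .
  have "L *\<^sub>v ?s = L *\<^sub>v unit_vec N u + L *\<^sub>v unit_vec N v - (2 / of_nat N) \<cdot>\<^sub>v (L *\<^sub>v ones)"
    using L ones by (simp add: mult_minus_distrib_mat_vec mult_add_distrib_mat_vec mult_mat_vec)
  also have "\<dots> = of_nat N \<cdot>\<^sub>v ?s"
    unfolding Lu Lv L1 unfolding ones_def using u v \<open>u \<noteq> v\<close>
    by (intro eq_vecI) (auto simp: field_simps)
  finally show "L *\<^sub>v ?s = of_nat N \<cdot>\<^sub>v ?s" .
qed

lemma lap_walk_complete_minus_mult_unit_vec:
  assumes disj: "\<forall>e\<in>F. \<forall>e'\<in>F. e \<noteq> e' \<longrightarrow> e \<inter> e' = {}" and uv: "{u,v} \<in> F"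
    and u: "u < N" and v: "v < N" and "u \<noteq> v"
  defines "ones \<equiv> vec N (\<lambda>_. 1)"
    and "d \<equiv> unit_vec N u - unit_vec N v"
    and "s \<equiv> unit_vec N u + unit_vec N v - (2 / of_nat N) \<cdot>\<^sub>v vec N (\<lambda>_. 1)"
  shows "lap_walk N (complete_minus N F) t *\<^sub>v unit_vec N u = (1 / of_nat N) \<cdot>\<^sub>v ones
    + (exp (- \<i> * of_real t * (of_nat N - 2)) / 2) \<cdot>\<^sub>v d + (exp (- \<i> * of_real t * of_nat N) / 2) \<cdot>\<^sub>v s"
proof -
  let ?U = "lap_walk N (complete_minus N F) t"
  have U: "?U \<in> carrier_mat N N"
    using laplacian_carrier_mat[of N "complete_minus N F"] by (simp add: lap_walk_def mat_exp_def)
  have carriers: "ones \<in> carrier_vec N" "d \<in> carrier_vec N" "s \<in> carrier_vec N"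
    unfolding ones_def d_def s_def by auto
  have L1: "laplacian N (complete_minus N F) *\<^sub>v ones = 0 \<cdot>\<^sub>v ones"
    unfolding ones_def laplacian_mult_ones by auto
  note Ld_Ls = laplacian_complete_minus_eigenvectors[OF disj uv u v \<open>u \<noteq> v\<close>, folded d_def s_def]
  have "unit_vec N u = (1 / of_nat N) \<cdot>\<^sub>v ones + (1/2) \<cdot>\<^sub>v d + (1/2) \<cdot>\<^sub>v s"
    unfolding ones_def d_def s_def using u v by (intro eq_vecI) (auto simp: field_simps)
  then have "?U *\<^sub>v unit_vec N u
      = (1 / of_nat N) \<cdot>\<^sub>v (?U *\<^sub>v ones) + ((1/2) \<cdot>\<^sub>v (?U *\<^sub>v d) + (1/2) \<cdot>\<^sub>v (?U *\<^sub>v s))"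
    using U carriers by (simp add: mult_add_distrib_mat_vec mult_mat_vec)
  then show ?thesis
    using carriers
    by (simp add: lap_walk_mult_eigenvector[OF _ L1] lap_walk_mult_eigenvector[OF _ Ld_Ls(1)]
        lap_walk_mult_eigenvector[OF _ Ld_Ls(2)] smult_smult_assoc)
qed

lemma exp_pi_half_mult_multiple_of_four:
  assumes "4 dvd N"
  shows "exp (- \<i> * of_real (pi/2) * of_nat N) = 1"
    and "exp (- \<i> * of_real (pi/2) * (of_nat N - 2)) = -1"
proof -
  obtain n where N: "N = 4 * n" using assms by blast
  have "- \<i> * of_real (pi/2) * of_nat N = of_nat n * (2 * of_real pi * \<i>) * -1"
    unfolding N by (simp add: algebra_simps)
  then show one: "exp (- \<i> * of_real (pi/2) * of_nat N) = 1"
    by (simp only: exp_of_nat_mult exp_two_pi_i exp_minus mult_minus1_right) simp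
  have "- \<i> * of_real (pi/2) * (of_nat N - 2) = - \<i> * of_real (pi/2) * of_nat N + of_real pi * \<i>"
    by (simp add: field_simps)
  then show "exp (- \<i> * of_real (pi/2) * (of_nat N - 2)) = -1"
    by (simp only: exp_add one exp_pi_i) simp
qed

lemma lap_walk_complete_minus_pi_half:
  assumes disj: "\<forall>e\<in>F. \<forall>e'\<in>F. e \<noteq> e' \<longrightarrow> e \<inter> e' = {}" and uv: "{u,v} \<in> F"
    and u: "u < N" and v: "v < N" and "u \<noteq> v" and "4 dvd N"
  shows "lap_walk N (complete_minus N F) (pi/2) *\<^sub>v unit_vec N u = unit_vec N v"
  unfolding lap_walk_complete_minus_mult_unit_vec[OF disj uv u v \<open>u \<noteq> v\<close>]
    exp_pi_half_mult_multiple_of_four[OF \<open>4 dvd N\<close>]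
  using u v \<open>u \<noteq> v\<close> by (intro eq_vecI) (auto simp: field_simps)

theorem corollary2p5:
  fixes n :: nat and F :: "nat set set"
  assumes edges: "\<forall>e\<in>F. \<exists>a b. a < 4*n \<and> b < 4*n \<and> a \<noteq> b \<and> e = {a,b}"
    and disj: "\<forall>e\<in>F. \<forall>e'\<in>F. e \<noteq> e' \<longrightarrow> e \<inter> e' = {}"
    and nonempty: "F \<noteq> {}"
  shows "\<forall>u v. {u,v} \<in> F \<longrightarrow> lap_pst (4*n) (complete_minus (4*n) F) u v (pi/2)"
proof (intro allI impI)
  fix u v assume uv: "{u,v} \<in> F"
  with edges have "u < 4*n" "v < 4*n" "u \<noteq> v" by (auto simp: doubleton_eq_iff)
  with lap_walk_complete_minus_pi_half[OF disj uv]
  show "lap_pst (4*n) (complete_minus (4*n) F) u v (pi/2)"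
    unfolding lap_pst_def by (metis dvd_triv_left one_smult_vec)
qed

end
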